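(* Let $k\geq 2$ and $\ell\geq 2$ be integers. Let $G(k,\ell)$ be the graph obtained from the disjoint union of $\ell$ copies $K(1),\dots,K(\ell)$ of $K_{2k}$, where the vertex set of each $K(i)$ is partitioned into two sets $L(i)$ and $R(i)$ of size $k$, by adding, for every $i\in\{1,\dots,\ell\}$ (indices modulo $\ell$), a perfect matching $M(i)$ between $R(i)$ and $L(i+1)$. Let $G'(k,\ell)$ be obtained from $G(k,\ell)$ by adding, for every $i$ (indices modulo $\ell$), a further perfect matching between $R(i)$ and $L(i+1)$ that is edge-disjoint from $M(i)$. Then $G(k,\ell)$ is a connected $2k$-regular graph and $G'(k,\ell)$ is a connected $(2k+1)$-regular graph, and both satisfy $2\alpha=\mathrm{diss}$, i.e. $2\alpha(G(k,\ell))=\mathrm{diss}(G(k,\ell))=2\ell$ and $2\alpha(G'(k,\ell))=\mathrm{diss}(G'(k,\ell))=2\ell$.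
   Context: All graphs are finite, simple and undirected. $\alpha(G)$ is the independence number. A set $D$ of vertices is a dissociation set if the induced subgraph $G[D]$ has maximum degree at most $1$; $\mathrm{diss}(G)$ is the maximum order of a dissociation set. *)

theory Defs
  imports Main
begin

text \<open>A finite simple graph is given by a vertex set V and a symmetric irreflexive
adjacency relation E (only its restriction to V matters).\<close>

definition indep_set :: "'a set \<Rightarrow> ('a \<Rightarrow> 'a \<Rightarrow> bool) \<Rightarrow> 'a set \<Rightarrow> bool" where
  "indep_set V E S \<longleftrightarrow> S \<subseteq> V \<and> (\<forall>x\<in>S. \<forall>y\<in>S. \<not> E x y)"

definition dissoc_set :: "'a set \<Rightarrow> ('a \<Rightarrow> 'a \<Rightarrow> bool) \<Rightarrow> 'a set \<Rightarrow> bool" where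
  "dissoc_set V E D \<longleftrightarrow> D \<subseteq> V \<and> (\<forall>x\<in>D. card {y\<in>D. E x y} \<le> 1)"

definition alpha :: "'a set \<Rightarrow> ('a \<Rightarrow> 'a \<Rightarrow> bool) \<Rightarrow> nat" where
  "alpha V E = Max {card S | S. indep_set V E S}"

definition diss :: "'a set \<Rightarrow> ('a \<Rightarrow> 'a \<Rightarrow> bool) \<Rightarrow> nat" where
  "diss V E = Max {card D | D. dissoc_set V E D}"

definition regular :: "'a set \<Rightarrow> ('a \<Rightarrow> 'a \<Rightarrow> bool) \<Rightarrow> nat \<Rightarrow> bool" where
  "regular V E d \<longleftrightarrow> (\<forall>v\<in>V. card {u\<in>V. E v u} = d)"

definition connected_graph :: "'a set \<Rightarrow> ('a \<Rightarrow> 'a \<Rightarrow> bool) \<Rightarrow> bool" where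
  "connected_graph V E \<longleftrightarrow> V \<noteq> {} \<and>
     (\<forall>u\<in>V. \<forall>v\<in>V. (\<lambda>x y. x \<in> V \<and> y \<in> V \<and> E x y)\<^sup>*\<^sup>* u v)"

text \<open>Vertices of G(k,l): (i, s, j) with i < l the copy index, s = False for L(i),
 s = True for R(i), and j < k the position inside L(i) resp. R(i).\<close>

definition GV :: "nat \<Rightarrow> nat \<Rightarrow> (nat \<times> bool \<times> nat) set" where
  "GV k l = {(i, s, j). i < l \<and> j < k}"

definition clique_adj :: "nat \<times> bool \<times> nat \<Rightarrow> nat \<times> bool \<times> nat \<Rightarrow> bool" where
  "clique_adj u v \<longleftrightarrow> u \<noteq> v \<and> fst u = fst v"

text \<open>Matching edges given by bijections \<sigma> i : R(i) \<rightarrow> L(i+1 mod l): (i,R,j) -- (i+1 mod l, L, \<sigma> i j).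
 Symmetrised.\<close>
definition match_adj :: "nat \<Rightarrow> (nat \<Rightarrow> nat \<Rightarrow> nat) \<Rightarrow> nat \<times> bool \<times> nat \<Rightarrow> nat \<times> bool \<times> nat \<Rightarrow> bool" where
  "match_adj l \<sigma> u v \<longleftrightarrow>
     (\<exists>i j. u = (i, True, j) \<and> v = (Suc i mod l, False, \<sigma> i j)) \<or>
     (\<exists>i j. v = (i, True, j) \<and> u = (Suc i mod l, False, \<sigma> i j))"

definition G_adj :: "nat \<Rightarrow> (nat \<Rightarrow> nat \<Rightarrow> nat) \<Rightarrow> nat \<times> bool \<times> nat \<Rightarrow> nat \<times> bool \<times> nat \<Rightarrow> bool" where
  "G_adj l \<sigma> u v \<longleftrightarrow> clique_adj u v \<or> match_adj l \<sigma> u v"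

definition G'_adj :: "nat \<Rightarrow> (nat \<Rightarrow> nat \<Rightarrow> nat) \<Rightarrow> (nat \<Rightarrow> nat \<Rightarrow> nat) \<Rightarrow>
    nat \<times> bool \<times> nat \<Rightarrow> nat \<times> bool \<times> nat \<Rightarrow> bool" where
  "G'_adj l \<sigma> \<tau> u v \<longleftrightarrow> G_adj l \<sigma> u v \<or> match_adj l \<tau> u v"

end

theory Submission
  imports Defs
begin

text \<open>Every vertex lies in one of the \<open>\<ell>\<close> copies of \<open>K\<^sub>2\<^sub>k\<close>, which are cliques; hence an
independent set meets each copy at most once and a dissociation set at most twice, so
\<open>\<alpha> \<le> \<ell>\<close> and \<open>diss \<le> 2\<ell>\<close>. Matching edges always join some \<open>R(i)\<close> to some \<open>L(i+1)\<close>, so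
vertices in the \<open>L\<close>-sides of distinct copies are never adjacent: one vertex of every \<open>L(i)\<close>
is independent and two vertices of every \<open>L(i)\<close> form a dissociation set. Each vertex has
\<open>2k - 1\<close> neighbours in its copy and exactly one partner in each matching; these are all
distinct because matchings join different copies (\<open>\<ell> \<ge> 2\<close>) and the two matchings are
edge-disjoint. Connectivity follows by walking from copy to copy along \<open>M(i)\<close>.\<close>

lemma Max_card_eqI:
  assumes "\<And>S. P S \<Longrightarrow> card S \<le> n" and "P S\<^sub>0" and "card S\<^sub>0 = n"
  shows "Max {card S | S. P S} = n"
proof (rule Max_eqI)
  show "finite {card S | S. P S}"
    by (rule finite_subset[of _ "{..n}"]) (auto dest: assms(1))
qed (use assms in auto)

lemma card_indep_le_clique_cover:
  assumes "c ` V \<subseteq> I" and "finite I"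
    and clique: "\<And>x y. x \<in> V \<Longrightarrow> y \<in> V \<Longrightarrow> x \<noteq> y \<Longrightarrow> c x = c y \<Longrightarrow> E x y"
    and "indep_set V E S"
  shows "card S \<le> card I"
proof -
  have "S \<subseteq> V" and "\<forall>x\<in>S. \<forall>y\<in>S. \<not> E x y"
    using assms(4) by (auto simp: indep_set_def)
  then have "inj_on c S" using clique by (meson inj_onI subsetD)
  moreover have "c ` S \<subseteq> I" using \<open>S \<subseteq> V\<close> assms(1) by blast
  ultimately show ?thesis using \<open>finite I\<close> by (rule card_inj_on_le)
qed

lemma card_dissoc_clique_le_2:
  assumes "finite V"
    and clique: "\<And>x y. x \<in> V \<Longrightarrow> y \<in> V \<Longrightarrow> x \<noteq> y \<Longrightarrow> c x = c y \<Longrightarrow> E x y"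
    and "dissoc_set V E D"
  shows "card {x\<in>D. c x = i} \<le> 2"
proof (cases "{x\<in>D. c x = i} = {}")
  case False
  then obtain x where x: "x \<in> D" "c x = i" by blast
  have "D \<subseteq> V" and deg: "card {y\<in>D. E x y} \<le> 1"
    using assms(3) x by (auto simp: dissoc_set_def)
  then have fin: "finite D" using \<open>finite V\<close> finite_subset by blast
  have "{x\<in>D. c x = i} - {x} \<subseteq> {y\<in>D. E x y}"
  proof
    fix y assume "y \<in> {x\<in>D. c x = i} - {x}"
    then show "y \<in> {y\<in>D. E x y}"
      using clique[of x y] x \<open>D \<subseteq> V\<close> by auto
  qed
  then have "card ({x\<in>D. c x = i} - {x}) \<le> card {y\<in>D. E x y}"
    using fin by (intro card_mono) auto
  then show ?thesis using fin x deg by (simp add: card_Diff_singleton)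
qed (metis card.empty le0)

lemma card_dissoc_le_clique_cover:
  assumes "finite V" and "c ` V \<subseteq> I" and "finite I"
    and clique: "\<And>x y. x \<in> V \<Longrightarrow> y \<in> V \<Longrightarrow> x \<noteq> y \<Longrightarrow> c x = c y \<Longrightarrow> E x y"
    and D: "dissoc_set V E D"
  shows "card D \<le> 2 * card I"
proof -
  have "D = (\<Union>i\<in>I. {x\<in>D. c x = i})"
    using D assms(2) by (auto simp: dissoc_set_def)
  then have "card D \<le> (\<Sum>i\<in>I. card {x\<in>D. c x = i})"
    by (metis card_UN_le[OF \<open>finite I\<close>])
  also have "\<dots> \<le> (\<Sum>i\<in>I. 2)"
    by (intro sum_mono card_dissoc_clique_le_2[OF \<open>finite V\<close> clique D])
  finally show ?thesis by simp
qed

lemma connected_graphI: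
  assumes "r \<in> V" and "symp E"
    and reach: "\<And>v. v \<in> V \<Longrightarrow> (\<lambda>x y. x \<in> V \<and> y \<in> V \<and> E x y)\<^sup>*\<^sup>* r v"
  shows "connected_graph V E"
proof -
  let ?R = "\<lambda>x y. x \<in> V \<and> y \<in> V \<and> E x y"
  have "symp ?R\<^sup>*\<^sup>*" using \<open>symp E\<close> by (intro symp_rtranclp) (auto simp: symp_def)
  then have "?R\<^sup>*\<^sup>* u v" if "u \<in> V" "v \<in> V" for u v
    using reach[OF that(1)] reach[OF that(2)] by (meson rtranclp_trans sympD)
  then show ?thesis using \<open>r \<in> V\<close> by (auto simp: connected_graph_def)
qed

lemma connected_graph_mono:
  assumes "connected_graph V E" and "\<And>x y. E x y \<Longrightarrow> E' x y"
  shows "connected_graph V E'"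
proof -
  have "(\<lambda>x y. x \<in> V \<and> y \<in> V \<and> E x y)\<^sup>*\<^sup>* \<le> (\<lambda>x y. x \<in> V \<and> y \<in> V \<and> E' x y)\<^sup>*\<^sup>*"
    using assms(2) by (intro rtranclp_mono) auto
  then show ?thesis using assms(1) by (auto simp: connected_graph_def le_fun_def)
qed

lemma card_Collect_disj:
  assumes "finite V" and "\<And>u. u \<in> V \<Longrightarrow> P u \<Longrightarrow> \<not> Q u"
  shows "card {u\<in>V. P u \<or> Q u} = card {u\<in>V. P u} + card {u\<in>V. Q u}"
proof -
  have "{u\<in>V. P u \<or> Q u} = {u\<in>V. P u} \<union> {u\<in>V. Q u}" by blast
  then show ?thesis using assms by (simp add: card_Un_disjoint disjoint_iff)
qed

lemma Suc_mod_neq: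
  assumes "2 \<le> l" shows "Suc i mod l \<noteq> i"
proof -
  have lt: "Suc i mod l < l" using assms by simp
  then consider "Suc i < l" | "Suc i = l" | "l \<le> i" by linarith
  then show ?thesis
  proof cases
    case 3 then show ?thesis using lt by linarith
  qed (use assms in auto)
qed

lemma Suc_mod_inj:
  assumes "a < l" and "b < l" and "Suc a mod l = Suc b mod l"
  shows "a = b"
  using assms by (auto simp: mod_if split: if_splits)

lemma Suc_mod_surj:
  assumes "i < l" obtains a where "a < l" and "Suc a mod l = i"
proof (cases i)
  case 0 then show ?thesis using assms that[of "l - 1"] by simp
next
  case (Suc a) then show ?thesis using assms that[of a] by simp
qed

lemma GV_eq: "GV k l = {..<l} \<times> UNIV \<times> {..<k}"
  by (auto simp: GV_def)

lemma finite_GV: "finite (GV k l)"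
  by (simp add: GV_eq)

lemma fst_GV_subset: "fst ` GV k l \<subseteq> {..<l}"
  by (auto simp: GV_def)

lemma card_clique_neighbours:
  assumes "v \<in> GV k l"
  shows "card {u\<in>GV k l. clique_adj v u} = 2 * k - 1"
proof -
  have "{u\<in>GV k l. clique_adj v u} = {fst v} \<times> UNIV \<times> {..<k} - {v}"
    and "v \<in> {fst v} \<times> UNIV \<times> {..<k}"
    using assms by (auto simp: clique_adj_def GV_def)
  then show ?thesis by (simp add: card_cartesian_product)
qed

lemma match_adj_fst_neq: "2 \<le> l \<Longrightarrow> match_adj l f u v \<Longrightarrow> fst u \<noteq> fst v"
  unfolding match_adj_def using Suc_mod_neq[of l] by (metis fst_conv)

lemma match_adj_sides_neq: "match_adj l f u v \<Longrightarrow> fst (snd u) \<noteq> fst (snd v)"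
  by (auto simp: match_adj_def)

lemma match_neighbours_singleton:
  assumes "v \<in> GV k l" and bij: "\<forall>i<l. bij_betw (f i) {..<k} {..<k}"
  obtains w where "{u\<in>GV k l. match_adj l f v u} = {w}"
proof -
  obtain i s j where v: "v = (i, s, j)" "i < l" "j < k" using assms(1) by (auto simp: GV_def)
  show ?thesis
  proof (cases s)
    case True
    have "f i j < k" using bij v bij_betw_apply by fastforce
    then have "{u\<in>GV k l. match_adj l f v u} = {(Suc i mod l, False, f i j)}"
      using v True by (auto simp: match_adj_def GV_def)
    then show ?thesis by (rule that)
  next
    case False
    obtain a where a: "a < l" "Suc a mod l = i" using Suc_mod_surj[OF \<open>i < l\<close>] .
    then have bij_a: "bij_betw (f a) {..<k} {..<k}" using bij by blast
    then obtain c where c: "c < k" "f a c = j" using \<open>j < k\<close> by (metis bij_betw_iff_bijections lessThan_iff)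
    have "{u\<in>GV k l. match_adj l f v u} = {(a, True, c)}"
    proof (intro equalityI subsetI)
      fix u assume "u \<in> {u\<in>GV k l. match_adj l f v u}"
      then obtain b d where u: "u = (b, True, d)" "b < l" "d < k" "Suc b mod l = i" "f b d = j"
        using v False by (auto simp: match_adj_def GV_def)
      then have "b = a" using a Suc_mod_inj by metis
      moreover have "d = c" using u c bij_a \<open>b = a\<close> by (metis bij_betw_imp_inj_on inj_onD lessThan_iff)
      ultimately show "u \<in> {(a, True, c)}" using u by simp
    qed (use a c v False in \<open>auto simp: match_adj_def GV_def\<close>)
    then show ?thesis by (rule that)
  qed
qed

lemma card_match_neighbours:
  assumes "v \<in> GV k l" and "\<forall>i<l. bij_betw (f i) {..<k} {..<k}"
  shows "card {u\<in>GV k l. match_adj l f v u} = 1"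
  by (rule match_neighbours_singleton[OF assms]) simp

lemma match_neighbours_disjoint:
  assumes "v \<in> GV k l" and "u \<in> GV k l" and "\<forall>i<l. \<forall>j<k. \<tau> i j \<noteq> \<sigma> i j"
  shows "\<not> (match_adj l \<sigma> v u \<and> match_adj l \<tau> v u)"
  using assms unfolding match_adj_def GV_def by fastforce

lemma clique_adj_not_match_adj: "2 \<le> l \<Longrightarrow> clique_adj u v \<Longrightarrow> \<not> match_adj l f u v"
  unfolding clique_adj_def using match_adj_fst_neq by blast

lemma regular_G_adj:
  assumes "\<forall>i<l. bij_betw (\<sigma> i) {..<k} {..<k}" and "2 \<le> l" and "1 \<le> k"
  shows "regular (GV k l) (G_adj l \<sigma>) (2 * k)"
  unfolding regular_def
proof
  fix v assume v: "v \<in> GV k l"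
  have "card {u\<in>GV k l. G_adj l \<sigma> v u}
      = card {u\<in>GV k l. clique_adj v u} + card {u\<in>GV k l. match_adj l \<sigma> v u}"
    unfolding G_adj_def using finite_GV clique_adj_not_match_adj[OF \<open>2 \<le> l\<close>]
    by (rule card_Collect_disj)
  then show "card {u\<in>GV k l. G_adj l \<sigma> v u} = 2 * k"
    using card_clique_neighbours[OF v] card_match_neighbours[OF v assms(1)] \<open>1 \<le> k\<close> by simp
qed

lemma regular_G'_adj:
  assumes "\<forall>i<l. bij_betw (\<sigma> i) {..<k} {..<k}" and "\<forall>i<l. bij_betw (\<tau> i) {..<k} {..<k}"
    and "\<forall>i<l. \<forall>j<k. \<tau> i j \<noteq> \<sigma> i j" and "2 \<le> l" and "1 \<le> k"
  shows "regular (GV k l) (G'_adj l \<sigma> \<tau>) (2 * k + 1)"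
  unfolding regular_def
proof
  fix v assume v: "v \<in> GV k l"
  have "card {u\<in>GV k l. G'_adj l \<sigma> \<tau> v u}
      = card {u\<in>GV k l. G_adj l \<sigma> v u} + card {u\<in>GV k l. match_adj l \<tau> v u}"
    unfolding G'_adj_def
  proof (rule card_Collect_disj[OF finite_GV])
    fix u assume u: "u \<in> GV k l" and "G_adj l \<sigma> v u"
    then show "\<not> match_adj l \<tau> v u"
      using clique_adj_not_match_adj[OF \<open>2 \<le> l\<close>, of v u \<tau>] match_neighbours_disjoint[OF v u assms(3)]
      unfolding G_adj_def by blast
  qed
  then show "card {u\<in>GV k l. G'_adj l \<sigma> \<tau> v u} = 2 * k + 1"
    using regular_G_adj[OF assms(1,4,5)] card_match_neighbours[OF v assms(2)] v
    by (simp add: regular_def)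
qed

lemma alpha_GV:
  assumes "1 \<le> k" and clique: "\<And>u v. clique_adj u v \<Longrightarrow> E u v" and irrefl: "\<And>u. \<not> E u u"
    and left_sides: "\<And>i i' j j'. E (i, False, j) (i', False, j') \<Longrightarrow> i = i'"
  shows "alpha (GV k l) E = l"
  unfolding alpha_def
proof (rule Max_card_eqI)
  show "card S \<le> l" if "indep_set (GV k l) E S" for S
    using card_indep_le_clique_cover[OF fst_GV_subset finite_lessThan _ that] clique
    by (simp add: clique_adj_def)
  let ?S = "(\<lambda>i. (i, False, 0)) ` {..<l}"
  have "\<not> E (i, False, 0) (i', False, 0)" for i i'
    using irrefl left_sides by metis
  then show "indep_set (GV k l) E ?S"
    using \<open>1 \<le> k\<close> by (auto simp: indep_set_def GV_def)
  show "card ?S = l" by (simp add: card_image inj_on_def)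
qed

lemma diss_GV:
  assumes "2 \<le> k" and clique: "\<And>u v. clique_adj u v \<Longrightarrow> E u v" and irrefl: "\<And>u. \<not> E u u"
    and left_sides: "\<And>i i' j j'. E (i, False, j) (i', False, j') \<Longrightarrow> i = i'"
  shows "diss (GV k l) E = 2 * l"
  unfolding diss_def
proof (rule Max_card_eqI)
  show "card D \<le> 2 * l" if "dissoc_set (GV k l) E D" for D
    using card_dissoc_le_clique_cover[OF finite_GV fst_GV_subset finite_lessThan _ that] clique
    by (simp add: clique_adj_def)
  let ?D = "{..<l} \<times> {False} \<times> {..<2::nat}"
  have "card {y\<in>?D. E x y} \<le> 1" if "x \<in> ?D" for x
  proof -
    obtain i j where x: "x = (i, False, j)" "j < 2" using \<open>x \<in> ?D\<close> by auto
    have "{y\<in>?D. E x y} \<subseteq> {(i, False, 1 - j)}"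
    proof
      fix y assume "y \<in> {y\<in>?D. E x y}"
      then obtain i' j' where y: "y = (i', False, j')" "j' < 2" and "E (i, False, j) (i', False, j')"
        using x by auto
      moreover from this have "i' = i" using left_sides by metis
      ultimately have "j' \<noteq> j" using irrefl by metis
      then show "y \<in> {(i, False, 1 - j)}" using x y \<open>i' = i\<close> by auto
    qed
    then show ?thesis using card_mono[of "{(i, False, 1 - j)}"] by fastforce
  qed
  then show "dissoc_set (GV k l) E ?D"
    using \<open>2 \<le> k\<close> by (auto simp: dissoc_set_def GV_def)
  show "card ?D = 2 * l" by (simp add: card_cartesian_product)
qed

lemma G_adj_eq_G'_adj: "G_adj l \<sigma> = G'_adj l \<sigma> \<sigma>"
  by (auto simp: fun_eq_iff G'_adj_def G_adj_def)

lemma alpha_diss_G'_adj: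
  assumes "2 \<le> k"
  shows "alpha (GV k l) (G'_adj l \<sigma> \<tau>) = l" and "diss (GV k l) (G'_adj l \<sigma> \<tau>) = 2 * l"
proof -
  have clique: "\<And>u v. clique_adj u v \<Longrightarrow> G'_adj l \<sigma> \<tau> u v"
    by (simp add: G'_adj_def G_adj_def)
  have irrefl: "\<And>u. \<not> G'_adj l \<sigma> \<tau> u u"
    by (auto simp: G'_adj_def G_adj_def clique_adj_def dest: match_adj_sides_neq)
  have left_sides: "\<And>i i' j j'. G'_adj l \<sigma> \<tau> (i, False, j) (i', False, j') \<Longrightarrow> i = i'"
    by (auto simp: G'_adj_def G_adj_def clique_adj_def match_adj_def)
  show "alpha (GV k l) (G'_adj l \<sigma> \<tau>) = l"
    using assms by (intro alpha_GV[OF _ clique irrefl left_sides]) simp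
  show "diss (GV k l) (G'_adj l \<sigma> \<tau>) = 2 * l"
    by (rule diss_GV[OF assms clique irrefl left_sides])
qed

lemma connected_G_adj:
  assumes bij: "\<forall>i<l. bij_betw (\<sigma> i) {..<k} {..<k}" and "1 \<le> k" and "1 \<le> l"
  shows "connected_graph (GV k l) (G_adj l \<sigma>)"
proof (rule connected_graphI)
  let ?R = "\<lambda>x y. x \<in> GV k l \<and> y \<in> GV k l \<and> G_adj l \<sigma> x y"
  let ?r = "(0, False, 0)"
  show "?r \<in> GV k l" using assms by (simp add: GV_def)
  show "symp (G_adj l \<sigma>)"
    by (auto simp: symp_def G_adj_def clique_adj_def match_adj_def)
  have within_copy: "?R\<^sup>*\<^sup>* (i, s, j) (i, s', j')" if "i < l" "j < k" "j' < k" for i s j s' j'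
  proof (cases "(i, s, j) = (i, s', j')")
    case False
    then have "?R (i, s, j) (i, s', j')" using that by (simp add: GV_def G_adj_def clique_adj_def)
    then show ?thesis by (rule r_into_rtranclp)
  qed simp
  have reach: "?R\<^sup>*\<^sup>* ?r (i, s, j)" if "i < l" "j < k" for i s j
    using that
  proof (induction i arbitrary: s j)
    case 0
    show ?case by (rule within_copy) (use 0 \<open>1 \<le> k\<close> in auto)
  next
    case (Suc i)
    have "bij_betw (\<sigma> i) {..<k} {..<k}" using bij Suc.prems by simp
    then have "\<sigma> i 0 \<in> {..<k}" by (rule bij_betw_apply) (use \<open>1 \<le> k\<close> in simp)
    then have "\<sigma> i 0 < k" by simp
    have "?R\<^sup>*\<^sup>* ?r (i, True, 0)" by (rule Suc.IH) (use Suc.prems \<open>1 \<le> k\<close> in auto)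
    moreover have "match_adj l \<sigma> (i, True, 0) (Suc i mod l, False, \<sigma> i 0)"
      unfolding match_adj_def by blast
    then have "?R (i, True, 0) (Suc i, False, \<sigma> i 0)"
      using Suc.prems \<open>1 \<le> k\<close> \<open>\<sigma> i 0 < k\<close> by (simp add: GV_def G_adj_def)
    ultimately have "?R\<^sup>*\<^sup>* ?r (Suc i, False, \<sigma> i 0)" by (rule rtranclp.rtrancl_into_rtrancl)
    then show ?case using within_copy[OF Suc.prems(1) \<open>\<sigma> i 0 < k\<close> Suc.prems(2)] by (rule rtranclp_trans)
  qed
  show "?R\<^sup>*\<^sup>* ?r v" if v: "v \<in> GV k l" for v
  proof -
    obtain i s j where "v = (i, s, j)" "i < l" "j < k" using v by (auto simp: GV_def)
    then show ?thesis using reach by blast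
  qed
qed

theorem mainTheorem8:
  fixes k l :: nat and \<sigma> \<tau> :: "nat \<Rightarrow> nat \<Rightarrow> nat"
  assumes "k \<ge> 2" and "l \<ge> 2"
    and "\<forall>i<l. bij_betw (\<sigma> i) {..<k} {..<k}"
    and "\<forall>i<l. bij_betw (\<tau> i) {..<k} {..<k}"
    and "\<forall>i<l. \<forall>j<k. \<tau> i j \<noteq> \<sigma> i j"
  shows "connected_graph (GV k l) (G_adj l \<sigma>) \<and> regular (GV k l) (G_adj l \<sigma>) (2 * k) \<and>
         2 * alpha (GV k l) (G_adj l \<sigma>) = diss (GV k l) (G_adj l \<sigma>) \<and>
         diss (GV k l) (G_adj l \<sigma>) = 2 * l \<and>
         connected_graph (GV k l) (G'_adj l \<sigma> \<tau>) \<and> regular (GV k l) (G'_adj l \<sigma> \<tau>) (2 * k + 1) \<and>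
         2 * alpha (GV k l) (G'_adj l \<sigma> \<tau>) = diss (GV k l) (G'_adj l \<sigma> \<tau>) \<and>
         diss (GV k l) (G'_adj l \<sigma> \<tau>) = 2 * l"
proof -
  have "1 \<le> k" "1 \<le> l" using assms(1,2) by simp_all
  then have conn: "connected_graph (GV k l) (G_adj l \<sigma>)"
    by (rule connected_G_adj[OF assms(3)])
  have "connected_graph (GV k l) (G'_adj l \<sigma> \<tau>)"
    using conn by (rule connected_graph_mono) (simp add: G'_adj_def)
  then show ?thesis
    using conn regular_G_adj[OF assms(3,2) \<open>1 \<le> k\<close>] regular_G'_adj[OF assms(3-5,2) \<open>1 \<le> k\<close>]
      alpha_diss_G'_adj[OF assms(1), of l \<sigma> \<tau>] alpha_diss_G'_adj[OF assms(1), of l \<sigma> \<sigma>]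
    by (simp add: G_adj_eq_G'_adj)
qed

end
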